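(* Let $P=2$ and let $X=WH$ with $W=(w_{mp})\in\mathbb{H}_{\mathcal S}^{M\times 2}$ and $H=(h_{pn})\in\mathbb{R}_+^{2\times N}$. Suppose: (C1) there exist $m_1,m_2\in\{1,\dots,M\}$ (not necessarily distinct) such that $I_{m_1 1},I_{m_1 2},I_{m_2 1},I_{m_2 2}>0$ and $$\Phi_{m_1 1}=1,\quad \Phi_{m_1 2}\boldsymbol\mu_{m_1 2}\neq\boldsymbol\mu_{m_1 1},\quad I_{m_1 1}\ge \frac12\,\frac{1-\Phi_{m_1 2}^2}{1-\Phi_{m_1 2}\langle\boldsymbol\mu_{m_1 1},\boldsymbol\mu_{m_1 2}\rangle}\,I_{m_1 2},$$ $$\Phi_{m_2 2}=1,\quad \Phi_{m_2 1}\boldsymbol\mu_{m_2 1}\neq\boldsymbol\mu_{m_2 2},\quad I_{m_2 2}\ge \frac12\,\frac{1-\Phi_{m_2 1}^2}{1-\Phi_{m_2 1}\langle\boldsymbol\mu_{m_2 2},\boldsymbol\mu_{m_2 1}\rangle}\,I_{m_2 1};$$ (C2) there exist $n_1\neq n_2$ in $\{1,\dots,N\}$ with $h_{1n_1}>0$, $h_{2n_1}=0$, $h_{2n_2}>0$, $h_{1n_2}=0$. Then the QNMF $X=WH$ is essentially unique.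
   Context: $\mathbb{H}$ denotes the quaternions; for $q=a+b\mathbf i+c\mathbf j+d\mathbf k$, $\mathrm{Re}\,q=a$, $\mathrm{Im}\,q=b\mathbf i+c\mathbf j+d\mathbf k$, $|\mathrm{Im}\,q|^2=b^2+c^2+d^2$. $\mathbb{H}_{\mathcal S}=\{q\in\mathbb{H}: \mathrm{Re}\,q\ge 0,\ |\mathrm{Im}\,q|^2\le(\mathrm{Re}\,q)^2\}$; $\mathbb{R}_+=[0,\infty)$. Polar parametrization: every $w\in\mathbb{H}_{\mathcal S}$ with $\mathrm{Re}\,w>0$ is written $w=I+I\Phi\boldsymbol\mu$ with intensity $I=\mathrm{Re}\,w>0$, degree of polarization $\Phi=|\mathrm{Im}\,w|/\mathrm{Re}\,w\in[0,1]$, and polarization axis $\boldsymbol\mu$ a pure unit quaternion ($\mathrm{Re}\,\boldsymbol\mu=0$, $|\boldsymbol\mu|=1$), with $\boldsymbol\mu=\mathrm{Im}\,w/|\mathrm{Im}\,w|$ when $\mathrm{Im}\,w\ne0$ (arbitrary otherwise). For the entries of $W$ we write $w_{mp}=I_{mp}+I_{mp}\Phi_{mp}\boldsymbol\mu_{mp}$. For pure quaternions, $\langle\boldsymbol\mu_1,\boldsymbol\mu_2\rangle=-\mathrm{Re}(\boldsymbol\mu_1\boldsymbol\mu_2)$, the Euclidean inner product in $\mathbb{R}^3$. The QNMF $X=WH$ is essentially unique if for every $\tilde W\in\mathbb{H}_{\mathcal S}^{M\times P}$, $\tilde H\in\mathbb{R}_+^{P\times N}$ with $X=\tilde W\tilde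 H$ there exist a diagonal matrix $D$ with strictly positive diagonal entries and a permutation matrix $\Pi$ such that $\tilde W=WD\Pi$ and $\tilde H=(D\Pi)^{-1}H$. *)

theory Defs
  imports "HOL-Analysis.Analysis" "HOL-Analysis.Cross3"
begin

text \<open>Quaternions q = a + b i + c j + d k are represented as pairs (Re q, Im q) with
  Im q :: real^3 the vector (b,c,d).\<close>

type_synonym quat = "real \<times> (real^3)"

definition qRe :: "quat \<Rightarrow> real" where "qRe q = fst q"
definition qIm :: "quat \<Rightarrow> real^3" where "qIm q = snd q"

definition qmult :: "quat \<Rightarrow> quat \<Rightarrow> quat" where
  "qmult p q = (fst p * fst q - snd p \<bullet> snd q,
                fst p *\<^sub>R snd q + fst q *\<^sub>R snd p + cross3 (snd p) (snd q))"

text \<open>Inner product of pure quaternions: -Re(mu1 mu2).\<close>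
definition qinner :: "quat \<Rightarrow> quat \<Rightarrow> real" where
  "qinner a b = - qRe (qmult a b)"

definition in_HS :: "quat \<Rightarrow> bool" where
  "in_HS q \<longleftrightarrow> qRe q \<ge> 0 \<and> (norm (qIm q))\<^sup>2 \<le> (qRe q)\<^sup>2"

text \<open>Polar parametrization w = I + I Phi mu.\<close>
definition intens :: "quat \<Rightarrow> real" where "intens q = qRe q"
definition dop :: "quat \<Rightarrow> real" where "dop q = norm (qIm q) / qRe q"
definition polaxis :: "quat \<Rightarrow> quat" where
  "polaxis q = (if qIm q = 0 then (0, axis 1 1) else (0, (1 / norm (qIm q)) *\<^sub>R qIm q))"

text \<open>Matrix product X = W H with W an M x P quaternion matrix and H a real P x N matrix
  (0-based indices; only entries within bounds are meaningful).\<close>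
definition qmatmul :: "nat \<Rightarrow> (nat \<Rightarrow> nat \<Rightarrow> quat) \<Rightarrow> (nat \<Rightarrow> nat \<Rightarrow> real) \<Rightarrow> nat \<Rightarrow> nat \<Rightarrow> quat" where
  "qmatmul P W H m n = (\<Sum>p<P. H p n *\<^sub>R W m p)"

text \<open>For a diagonal D = diag(d) and permutation
  matrix Pi with Pi_{q p} = 1 iff q = sigma p:
  (W D Pi)_{m p} = d_{sigma p} W_{m, sigma p},  ((D Pi)^{-1} H)_{p n} = H_{sigma p, n} / d_{sigma p}.\<close>
definition ess_unique :: "nat \<Rightarrow> nat \<Rightarrow> nat \<Rightarrow> (nat \<Rightarrow> nat \<Rightarrow> quat) \<Rightarrow> (nat \<Rightarrow> nat \<Rightarrow> real) \<Rightarrow> bool" where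
  "ess_unique M P N W H \<longleftrightarrow>
    (\<forall>W' H'. (\<forall>m<M. \<forall>p<P. in_HS (W' m p)) \<and> (\<forall>p<P. \<forall>n<N. H' p n \<ge> 0) \<and>
       (\<forall>m<M. \<forall>n<N. qmatmul P W' H' m n = qmatmul P W H m n) \<longrightarrow>
       (\<exists>d \<sigma>. (\<forall>p<P. d p > 0) \<and> \<sigma> permutes {..<P} \<and>
          (\<forall>m<M. \<forall>p<P. W' m p = d (\<sigma> p) *\<^sub>R W m (\<sigma> p)) \<and>
          (\<forall>p<P. \<forall>n<N. H' p n = H (\<sigma> p) n / d (\<sigma> p))))"

end

theory Submission imports Defs begin

text \<open>The cone \<open>\<H>\<^sub>S\<close> is a second-order (Lorentz) cone, so a fully polarized
  entry (\<open>\<Phi> = 1\<close>) spans an extreme ray: if it is the sum of two elements of the cone, both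
  are multiples of it. By (C2) the columns of \<open>W\<close> are nonnegative combinations
  \<open>w\<^sub>1 = a w\<^sub>1' + b w\<^sub>2'\<close>, \<open>w\<^sub>2 = c w\<^sub>1' + d w\<^sub>2'\<close> of the columns of any other
  factor \<open>W'\<close>. In row \<open>m\<^sub>1\<close> the fully polarized entry is linearly independent of the other
  one, and extremality forces \<open>a b = 0\<close>; row \<open>m\<^sub>2\<close> forces \<open>c d = 0\<close> likewise. Independence
  also rules out a zero row or column of the mixing matrix, which is therefore a positive
  monomial matrix, and \<open>H'\<close> is then read off from row \<open>m\<^sub>1\<close>.\<close>

definition lin_indep_pair :: "'a::real_vector \<Rightarrow> 'a \<Rightarrow> bool" where
  "lin_indep_pair u v \<longleftrightarrow> (\<forall>k l. k *\<^sub>R u + l *\<^sub>R v = 0 \<longrightarrow> k = 0 \<and> l = 0)"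

lemma lin_indep_pairI:
  assumes "u \<noteq> 0" and "\<forall>t. v \<noteq> t *\<^sub>R u"
  shows "lin_indep_pair u v"
  unfolding lin_indep_pair_def
proof (intro allI impI)
  fix k l assume comb: "k *\<^sub>R u + l *\<^sub>R v = 0"
  have "l = 0"
  proof (rule ccontr)
    assume "l \<noteq> 0"
    have "l *\<^sub>R v = (- k) *\<^sub>R u"
      using comb by (simp add: eq_neg_iff_add_eq_0 add.commute)
    then have "(1 / l) *\<^sub>R (l *\<^sub>R v) = (1 / l) *\<^sub>R ((- k) *\<^sub>R u)" by simp
    with \<open>l \<noteq> 0\<close> have "v = (- k / l) *\<^sub>R u" by simp
    with assms(2) show False by blast
  qed
  with comb assms(1) show "k = 0 \<and> l = 0" by simp
qed

lemma lin_indep_pair_coeffs_eq: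
  assumes "lin_indep_pair u v" and "k *\<^sub>R u + l *\<^sub>R v = k' *\<^sub>R u + l' *\<^sub>R v"
  shows "k = k'" and "l = l'"
proof -
  have "(k - k') *\<^sub>R u + (l - l') *\<^sub>R v = 0"
    using assms(2) by (simp add: algebra_simps)
  with assms(1) have "k - k' = 0 \<and> l - l' = 0"
    unfolding lin_indep_pair_def by blast
  then show "k = k'" "l = l'" by simp_all
qed

lemma in_HS_scaleR:
  assumes "in_HS q" and "a \<ge> 0"
  shows "in_HS (a *\<^sub>R q)"
proof -
  have "(norm (snd q))\<^sup>2 \<le> (fst q)\<^sup>2" "fst q \<ge> 0"
    using assms(1) by (auto simp: in_HS_def qRe_def qIm_def)
  then have "a\<^sup>2 * (norm (snd q))\<^sup>2 \<le> a\<^sup>2 * (fst q)\<^sup>2"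
    by (simp add: mult_left_mono)
  with assms show ?thesis
    by (auto simp: in_HS_def qRe_def qIm_def power_mult_distrib)
qed

lemma norm_qIm_eq_qRe_if_dop_eq_1:
  assumes "qRe w > 0" and "dop w = 1"
  shows "norm (qIm w) = qRe w"
  using assms by (simp add: dop_def field_simps)

lemma in_HS_boundary_extreme_ray:
  assumes "in_HS u" "in_HS v" and boundary: "norm (qIm (u + v)) = qRe (u + v)"
  shows "\<exists>t. u = t *\<^sub>R (u + v)"
proof -
  obtain r x s y where u: "u = (r, x)" and v: "v = (s, y)" by fastforce
  have "r \<ge> 0" "s \<ge> 0" "norm x \<le> r" "norm y \<le> s"
    using assms(1,2) u v by (auto simp: in_HS_def qRe_def qIm_def intro: power2_le_imp_le)
  moreover have "norm (x + y) = r + s"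
    using boundary u v by (simp add: qRe_def qIm_def)
  moreover note norm_triangle_ineq[of x y]
  ultimately have nx: "norm x = r" and ny: "norm y = s" by linarith+
  with \<open>norm (x + y) = r + s\<close> have collinear: "r *\<^sub>R y = s *\<^sub>R x"
    using norm_triangle_eq by metis
  show ?thesis
  proof (cases "r + s = 0")
    case True
    with \<open>r \<ge> 0\<close> \<open>s \<ge> 0\<close> have "r = 0" by linarith
    with nx u have "u = 0" by (simp add: zero_prod_def)
    then show ?thesis by auto
  next
    case False
    have "(r + s) *\<^sub>R ((r / (r + s)) *\<^sub>R (x + y)) = (r + s) *\<^sub>R x"
      using False collinear by (simp add: scaleR_add_right scaleR_add_left)
    then have "(r / (r + s)) *\<^sub>R (x + y) = x"
      using False by (metis scaleR_cancel_left)
    with False show ?thesis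
      using u v by (intro exI[of _ "r / (r + s)"]) simp
  qed
qed

lemma fully_polarized_not_multiple:
  assumes "qRe w0 > 0" "qRe w1 > 0" "dop w0 = 1"
    and "dop w1 *\<^sub>R polaxis w1 \<noteq> polaxis w0"
  shows "w1 \<noteq> t *\<^sub>R w0"
proof
  assume w1: "w1 = t *\<^sub>R w0"
  then have re: "qRe w1 = t * qRe w0" by (simp add: qRe_def)
  with assms(1,2) have "t > 0" by (metis zero_less_mult_pos2)
  have im: "qIm w1 = t *\<^sub>R qIm w0" using w1 by (simp add: qIm_def)
  have n0: "norm (qIm w0) = qRe w0"
    using assms(1,3) by (rule norm_qIm_eq_qRe_if_dop_eq_1)
  with assms(1) have "qIm w0 \<noteq> 0" by auto
  have "dop w1 = 1" using \<open>t > 0\<close> n0 assms(1) im re by (simp add: dop_def)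
  moreover have "polaxis w1 = polaxis w0"
    using \<open>t > 0\<close> \<open>qIm w0 \<noteq> 0\<close> im by (simp add: polaxis_def)
  ultimately show False using assms(4) by simp
qed

lemma lin_indep_pair_if_fully_polarized:
  assumes "qRe w0 > 0" "qRe w1 > 0" "dop w0 = 1"
    and "dop w1 *\<^sub>R polaxis w1 \<noteq> polaxis w0"
  shows "lin_indep_pair w0 w1"
proof (rule lin_indep_pairI)
  show "w0 \<noteq> 0" using assms(1) by (auto simp: qRe_def)
  show "\<forall>t. w1 \<noteq> t *\<^sub>R w0" using fully_polarized_not_multiple[OF assms] by blast
qed

lemma extreme_mixing_product_zero:
  assumes "in_HS x" "in_HS y" "a \<ge> 0" "b \<ge> 0"
    and u: "u = a *\<^sub>R x + b *\<^sub>R y" and v: "v = c *\<^sub>R x + d *\<^sub>R y"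
    and boundary: "norm (qIm u) = qRe u" and indep: "lin_indep_pair u v"
  shows "a * b = 0"
proof -
  have hs: "in_HS (a *\<^sub>R x)" "in_HS (b *\<^sub>R y)"
    using assms(1-4) by (auto intro: in_HS_scaleR)
  obtain \<alpha> where \<alpha>: "a *\<^sub>R x = \<alpha> *\<^sub>R u"
    using in_HS_boundary_extreme_ray[OF hs] boundary u by metis
  obtain \<beta> where \<beta>: "b *\<^sub>R y = \<beta> *\<^sub>R u"
    using in_HS_boundary_extreme_ray[OF hs(2,1)] boundary u by (metis add.commute)
  have "(a * b) *\<^sub>R v = (c * b) *\<^sub>R (a *\<^sub>R x) + (d * a) *\<^sub>R (b *\<^sub>R y)"
    by (simp add: v scaleR_add_right mult_ac)
  also have "\<dots> = (c * b * \<alpha> + d * a * \<beta>) *\<^sub>R u"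
    by (simp add: \<alpha> \<beta> scaleR_add_left)
  finally have "(c * b * \<alpha> + d * a * \<beta>) *\<^sub>R u + 0 *\<^sub>R v = 0 *\<^sub>R u + (a * b) *\<^sub>R v"
    by simp
  from lin_indep_pair_coeffs_eq(2)[OF indep this] show ?thesis by simp
qed

lemma monomial_if_mixing_products_zero:
  assumes indep: "lin_indep_pair u v"
    and u: "u = a *\<^sub>R x + b *\<^sub>R y" and v: "v = c *\<^sub>R x + d *\<^sub>R y"
    and "a * b = 0" "c * d = 0" "a \<ge> 0" "b \<ge> 0" "c \<ge> 0" "d \<ge> 0"
  shows "(b = 0 \<and> c = 0 \<and> a > 0 \<and> d > 0) \<or> (a = 0 \<and> d = 0 \<and> b > 0 \<and> c > 0)"
proof -
  have collinear: False if "u = k *\<^sub>R z" "v = l *\<^sub>R z" for k l z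
  proof -
    have "l *\<^sub>R u + (- k) *\<^sub>R v = 0 *\<^sub>R u + 0 *\<^sub>R v" using that by simp
    from lin_indep_pair_coeffs_eq[OF indep this] have "k = 0" "l = 0" by simp_all
    then have "1 *\<^sub>R u + 0 *\<^sub>R v = 0 *\<^sub>R u + 0 *\<^sub>R v" using that by simp
    from lin_indep_pair_coeffs_eq(1)[OF indep this] show False by simp
  qed
  have "\<not> (b = 0 \<and> d = 0)" "\<not> (a = 0 \<and> c = 0)"
    using collinear[of a x c] collinear[of b y d] u v by auto
  with assms(4-9) show ?thesis by (smt (verit) mult_eq_0_iff)
qed

lemma qmatmul_2: "qmatmul 2 W H m n = H 0 n *\<^sub>R W m 0 + H 1 n *\<^sub>R W m 1"
  by (simp add: qmatmul_def numeral_2_eq_2)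

lemma mixing_from_pure_columns:
  assumes "\<forall>p<2. \<forall>n<N. H' p n \<ge> 0"
    and "\<forall>m<M. \<forall>n<N. qmatmul 2 W' H' m n = qmatmul 2 W H m n"
    and "n1 < N" "n2 < N" "H 0 n1 > 0" "H 1 n1 = 0" "H 1 n2 > 0" "H 0 n2 = 0"
  obtains a b c d :: real where "a \<ge> 0" "b \<ge> 0" "c \<ge> 0" "d \<ge> 0"
    and "\<forall>m<M. W m 0 = a *\<^sub>R W' m 0 + b *\<^sub>R W' m 1 \<and> W m 1 = c *\<^sub>R W' m 0 + d *\<^sub>R W' m 1"
proof
  show "H' 0 n1 / H 0 n1 \<ge> 0" "H' 1 n1 / H 0 n1 \<ge> 0" "H' 0 n2 / H 1 n2 \<ge> 0" "H' 1 n2 / H 1 n2 \<ge> 0"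
    using assms by auto
  have column: "w = (k / h) *\<^sub>R x + (l / h) *\<^sub>R y"
    if "k *\<^sub>R x + l *\<^sub>R y = h *\<^sub>R w" "h > 0" for w x y :: quat and h k l :: real
  proof -
    have "(1 / h) *\<^sub>R (k *\<^sub>R x + l *\<^sub>R y) = (1 / h) *\<^sub>R (h *\<^sub>R w)" using that(1) by simp
    with that(2) show ?thesis by (simp add: scaleR_add_right)
  qed
  show "\<forall>m<M. W m 0 = (H' 0 n1 / H 0 n1) *\<^sub>R W' m 0 + (H' 1 n1 / H 0 n1) *\<^sub>R W' m 1 \<and>
      W m 1 = (H' 0 n2 / H 1 n2) *\<^sub>R W' m 0 + (H' 1 n2 / H 1 n2) *\<^sub>R W' m 1"
    using assms by (auto simp: qmatmul_2 intro!: column)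
qed

lemma monomial_mixing_permutation:
  fixes W W' :: "nat \<Rightarrow> nat \<Rightarrow> 'a::real_vector"
  assumes mix: "\<forall>m<M. W m 0 = a *\<^sub>R W' m 0 + b *\<^sub>R W' m 1 \<and> W m 1 = c *\<^sub>R W' m 0 + d *\<^sub>R W' m 1"
    and monomial: "(b = 0 \<and> c = 0 \<and> a > 0 \<and> d > 0) \<or> (a = 0 \<and> d = 0 \<and> b > 0 \<and> c > 0)"
  shows "\<exists>\<sigma> e. \<sigma> permutes {..<2::nat} \<and> (\<forall>p<2. e p > 0) \<and>
    (\<forall>m<M. \<forall>p<2. W' m p = e p *\<^sub>R W m (\<sigma> p))"
proof -
  have two: "\<And>p::nat. p < 2 \<longleftrightarrow> p = 0 \<or> p = 1" by auto
  from monomial show ?thesis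
  proof
    assume "b = 0 \<and> c = 0 \<and> a > 0 \<and> d > 0"
    with mix show ?thesis
      by (intro exI[of _ id] exI[of _ "\<lambda>p. if p = 0 then 1 / a else 1 / d"])
        (auto simp: two permutes_id)
  next
    assume "a = 0 \<and> d = 0 \<and> b > 0 \<and> c > 0"
    moreover have "Transposition.transpose 0 1 permutes {..<2::nat}"
      by (rule permutes_swap_id) auto
    ultimately show ?thesis using mix
      by (intro exI[of _ "Transposition.transpose 0 1"] exI[of _ "\<lambda>p. if p = 0 then 1 / c else 1 / b"])
        (auto simp: two)
  qed
qed

lemma coefficients_determined_by_row:
  assumes indep: "lin_indep_pair (W m 0) (W m 1)"
    and \<sigma>: "\<sigma> permutes {..<2}" and e: "\<forall>p<2. e p \<noteq> 0"
    and W': "\<forall>p<2. W' m p = e p *\<^sub>R W m (\<sigma> p)"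
    and X: "qmatmul 2 W' H' m n = qmatmul 2 W H m n"
  shows "\<forall>p<2. H' p n = H (\<sigma> p) n / e p"
proof -
  define k where "k q = H' (inv \<sigma> q) n * e (inv \<sigma> q)" for q
  have "qmatmul 2 W' H' m n = (\<Sum>p<2. (H' p n * e p) *\<^sub>R W m (\<sigma> p))"
    unfolding qmatmul_def using W' by (intro sum.cong) auto
  also have "\<dots> = (\<Sum>q<2. k q *\<^sub>R W m q)"
    by (subst sum.permute[OF permutes_inv[OF \<sigma>]]) (simp add: k_def permutes_inverses(1)[OF \<sigma>])
  also have "\<dots> = k 0 *\<^sub>R W m 0 + k 1 *\<^sub>R W m 1"
    by (simp add: numeral_2_eq_2)
  finally have "k 0 *\<^sub>R W m 0 + k 1 *\<^sub>R W m 1 = H 0 n *\<^sub>R W m 0 + H 1 n *\<^sub>R W m 1"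
    using X by (simp add: qmatmul_2)
  then have "\<forall>q<2. k q = H q n"
    using lin_indep_pair_coeffs_eq[OF indep] by (auto simp: less_2_cases_iff)
  then have "H' p n * e p = H (\<sigma> p) n" if "p < 2" for p
    using permutes_in_image[OF \<sigma>, of p] that by (auto simp: k_def permutes_inverses(2)[OF \<sigma>])
  with e show ?thesis by (simp add: eq_divide_eq)
qed

lemma ess_uniqueI:
  assumes "\<And>W' H'. \<forall>m<M. \<forall>p<P. in_HS (W' m p) \<Longrightarrow> \<forall>p<P. \<forall>n<N. H' p n \<ge> 0 \<Longrightarrow>
      \<forall>m<M. \<forall>n<N. qmatmul P W' H' m n = qmatmul P W H m n \<Longrightarrow>
      \<exists>\<sigma> e. \<sigma> permutes {..<P} \<and> (\<forall>p<P. e p > 0) \<and>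
        (\<forall>m<M. \<forall>p<P. W' m p = e p *\<^sub>R W m (\<sigma> p)) \<and> (\<forall>p<P. \<forall>n<N. H' p n = H (\<sigma> p) n / e p)"
  shows "ess_unique M P N W H"
  unfolding ess_unique_def
proof (intro allI impI, elim conjE)
  fix W' H'
  assume alternative: "\<forall>m<M. \<forall>p<P. in_HS (W' m p)" "\<forall>p<P. \<forall>n<N. H' p n \<ge> 0"
    "\<forall>m<M. \<forall>n<N. qmatmul P W' H' m n = qmatmul P W H m n"
  obtain \<sigma> e where \<sigma>: "\<sigma> permutes {..<P}" and e: "\<forall>p<P. e p > 0"
    and "\<forall>m<M. \<forall>p<P. W' m p = e p *\<^sub>R W m (\<sigma> p)" "\<forall>p<P. \<forall>n<N. H' p n = H (\<sigma> p) n / e p"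
    using assms[OF alternative] by blast
  moreover have "\<forall>p<P. (e \<circ> inv \<sigma>) p > 0"
    using e permutes_in_image[OF permutes_inv[OF \<sigma>]] by simp
  ultimately show "\<exists>d \<sigma>. (\<forall>p<P. d p > 0) \<and> \<sigma> permutes {..<P} \<and>
      (\<forall>m<M. \<forall>p<P. W' m p = d (\<sigma> p) *\<^sub>R W m (\<sigma> p)) \<and>
      (\<forall>p<P. \<forall>n<N. H' p n = H (\<sigma> p) n / d (\<sigma> p))"
    by (intro exI[of _ "e \<circ> inv \<sigma>"] exI[of _ \<sigma>]) (simp add: permutes_inverses(2)[OF \<sigma>])
qed

lemma factorization_unique_up_to_monomial:
  assumes "m1 < M" "m2 < M"
    and indep1: "lin_indep_pair (W m1 0) (W m1 1)" and indep2: "lin_indep_pair (W m2 1) (W m2 0)"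
    and extreme1: "norm (qIm (W m1 0)) = qRe (W m1 0)"
    and extreme2: "norm (qIm (W m2 1)) = qRe (W m2 1)"
    and pure: "n1 < N" "n2 < N" "H 0 n1 > 0" "H 1 n1 = 0" "H 1 n2 > 0" "H 0 n2 = 0"
    and W'_HS: "\<forall>m<M. \<forall>p<2. in_HS (W' m p)" and H'_nonneg: "\<forall>p<2. \<forall>n<N. H' p n \<ge> 0"
    and X: "\<forall>m<M. \<forall>n<N. qmatmul 2 W' H' m n = qmatmul 2 W H m n"
  shows "\<exists>\<sigma> e. \<sigma> permutes {..<2} \<and> (\<forall>p<2. e p > 0) \<and>
    (\<forall>m<M. \<forall>p<2. W' m p = e p *\<^sub>R W m (\<sigma> p)) \<and> (\<forall>p<2. \<forall>n<N. H' p n = H (\<sigma> p) n / e p)"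
proof -
  obtain a b c d :: real where nonneg: "a \<ge> 0" "b \<ge> 0" "c \<ge> 0" "d \<ge> 0"
    and mix: "\<forall>m<M. W m 0 = a *\<^sub>R W' m 0 + b *\<^sub>R W' m 1 \<and> W m 1 = c *\<^sub>R W' m 0 + d *\<^sub>R W' m 1"
    using mixing_from_pure_columns[OF H'_nonneg X pure] by blast
  have "a * b = 0"
    by (rule extreme_mixing_product_zero[of "W' m1 0" "W' m1 1" a b "W m1 0" "W m1 1" c d])
      (use W'_HS mix nonneg \<open>m1 < M\<close> extreme1 indep1 in auto)
  moreover have "d * c = 0"
    by (rule extreme_mixing_product_zero[of "W' m2 1" "W' m2 0" d c "W m2 1" "W m2 0" b a])
      (use W'_HS mix nonneg \<open>m2 < M\<close> extreme2 indep2 in \<open>auto simp: add.commute\<close>)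
  ultimately have "(b = 0 \<and> c = 0 \<and> a > 0 \<and> d > 0) \<or> (a = 0 \<and> d = 0 \<and> b > 0 \<and> c > 0)"
    using monomial_if_mixing_products_zero[OF indep1, where x = "W' m1 0" and y = "W' m1 1"]
      mix nonneg \<open>m1 < M\<close> by (simp add: mult.commute)
  then obtain \<sigma> e where \<sigma>: "\<sigma> permutes {..<2::nat}" and e: "\<forall>p<2. e p > 0"
    and W': "\<forall>m<M. \<forall>p<2. W' m p = e p *\<^sub>R W m (\<sigma> p)"
    using monomial_mixing_permutation[OF mix] by blast
  have "H' p n = H (\<sigma> p) n / e p" if "p < 2" "n < N" for p n
    using coefficients_determined_by_row[where W = W and m = m1, OF indep1 \<sigma>, of e W' H' n H]
      e W' X \<open>m1 < M\<close> that by fastforce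
  with \<sigma> e W' show ?thesis by blast
qed

theorem proposition3:
  fixes M N :: nat and W :: "nat \<Rightarrow> nat \<Rightarrow> quat" and H :: "nat \<Rightarrow> nat \<Rightarrow> real"
  assumes W_HS: "\<forall>m<M. \<forall>p<2. in_HS (W m p)"
    and H_nonneg: "\<forall>p<2. \<forall>n<N. H p n \<ge> 0"
    and C1: "\<exists>m1<M. \<exists>m2<M.
        intens (W m1 0) > 0 \<and> intens (W m1 1) > 0 \<and> intens (W m2 0) > 0 \<and> intens (W m2 1) > 0 \<and>
        dop (W m1 0) = 1 \<and> dop (W m1 1) *\<^sub>R polaxis (W m1 1) \<noteq> polaxis (W m1 0) \<and>
        intens (W m1 0) \<ge> 1/2 * ((1 - (dop (W m1 1))\<^sup>2) /
            (1 - dop (W m1 1) * qinner (polaxis (W m1 0)) (polaxis (W m1 1)))) * intens (W m1 1) \<and>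
        dop (W m2 1) = 1 \<and> dop (W m2 0) *\<^sub>R polaxis (W m2 0) \<noteq> polaxis (W m2 1) \<and>
        intens (W m2 1) \<ge> 1/2 * ((1 - (dop (W m2 0))\<^sup>2) /
            (1 - dop (W m2 0) * qinner (polaxis (W m2 1)) (polaxis (W m2 0)))) * intens (W m2 0)"
    and C2: "\<exists>n1<N. \<exists>n2<N. n1 \<noteq> n2 \<and>
        H 0 n1 > 0 \<and> H 1 n1 = 0 \<and> H 1 n2 > 0 \<and> H 0 n2 = 0"
  shows "ess_unique M 2 N W H"
proof -
  from C1 obtain m1 m2 where m: "m1 < M" "m2 < M"
    and indep: "lin_indep_pair (W m1 0) (W m1 1)" "lin_indep_pair (W m2 1) (W m2 0)"
    and extreme: "norm (qIm (W m1 0)) = qRe (W m1 0)" "norm (qIm (W m2 1)) = qRe (W m2 1)"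
    by (auto simp: intens_def intro: lin_indep_pair_if_fully_polarized norm_qIm_eq_qRe_if_dop_eq_1)
  from C2 obtain n1 n2
    where pure: "n1 < N" "n2 < N" "H 0 n1 > 0" "H 1 n1 = 0" "H 1 n2 > 0" "H 0 n2 = 0"
    by blast
  show ?thesis
    by (rule ess_uniqueI, rule factorization_unique_up_to_monomial[OF m indep extreme pure])
qed

end
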